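(* Let $f(\cdot;\theta):\mathbb{R}^d\to\mathbb{R}$ be a model with parameters $\theta\in\mathbb{R}^p$, let $x_1,\dots,x_n\in\mathbb{R}^d$ be training inputs with labels $y_i$, and let $\theta^*$ be a global minimum of the empirical risk with zero loss, i.e. $f(x_i;\theta^* )=y_i$ for all $i\in[n]$, at which $f(x_i;\cdot)$ is differentiable for every $i$. Fix a learning rate $\eta>0$. If $\theta^*$ is linearly stable for SGD with learning rate $\eta$, then $$\operatorname{tr}(G(\theta^* ))\le \frac{2}{\eta}.$$
   Context: The empirical Fisher matrix is $G(\theta)=\frac1n\sum_{i=1}^n \nabla_\theta f(x_i;\theta)\nabla_\theta f(x_i;\theta)^T$. Linearized SGD (batch size 1) at $\theta^*$ is the random recursion $\delta_{t+1}=\delta_t-\eta\,\nabla_\theta f(x_{i_t};\theta^* )\nabla_\theta f(x_{i_t};\theta^* )^T\delta_t$, where $i_0,i_1,\dots$ are i.i.d. uniform on $[n]=\{1,\dots,n\}$ and independent of $\delta_0$. The global minimum $\theta^*$ is called linearly stable (for SGD with learning rate $\eta$) if for every distribution of the initial deviation $\delta_0\in\mathbb{R}^p$ (with finite second moment) and every $t\in\mathbb{N}$, the solution of this recursion satisfies $\|\mathbb{E}[\delta_t\delta_t^T]\|_F\le\|\mathbb{E}[\delta_0\delta_0^T]\|_F$. *)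

theory Defs
  imports "HOL-Probability.Probability"
begin

definition outer :: "real^'p \<Rightarrow> real^'p \<Rightarrow> real^'p^'p" where
  "outer u v = (\<chi> a b. u $ a * v $ b)"

text \<open>Empirical Fisher matrix G = (1/n) sum_i g_i g_i^T, where g_i are the
  parameter gradients at the training points (index set = finite type 'n, n = CARD('n)).\<close>
definition empirical_fisher :: "('n::finite \<Rightarrow> real^'p) \<Rightarrow> real^'p^'p" where
  "empirical_fisher g = (1 / real CARD('n)) *\<^sub>R (\<Sum>i\<in>UNIV. outer (g i) (g i))"

definition frob_norm :: "real^'p^'p \<Rightarrow> real" where
  "frob_norm A = sqrt (\<Sum>a\<in>UNIV. \<Sum>b\<in>UNIV. (A $ a $ b)^2)"

fun lin_sgd :: "('n \<Rightarrow> real^'p) \<Rightarrow> real \<Rightarrow> (nat \<Rightarrow> 'n) \<Rightarrow> real^'p \<Rightarrow> nat \<Rightarrow> real^'p" where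
  "lin_sgd g \<eta> i \<delta>0 0 = \<delta>0"
| "lin_sgd g \<eta> i \<delta>0 (Suc t) =
     lin_sgd g \<eta> i \<delta>0 t - \<eta> *\<^sub>R ((g (i t) \<bullet> lin_sgd g \<eta> i \<delta>0 t) *\<^sub>R g (i t))"

definition second_moment :: "'s measure \<Rightarrow> ('s \<Rightarrow> real^'p) \<Rightarrow> real^'p^'p" where
  "second_moment M X = (\<chi> a b. integral\<^sup>L M (\<lambda>s. X s $ a * X s $ b))"

definition index_seq_measure :: "(nat \<Rightarrow> 'n::finite) measure" where
  "index_seq_measure = PiM UNIV (\<lambda>_. measure_pmf (pmf_of_set (UNIV :: 'n set)))"

definition linearly_stable :: "('n::finite \<Rightarrow> real^'p) \<Rightarrow> real \<Rightarrow> bool" where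
  "linearly_stable g \<eta> \<longleftrightarrow>
    (\<forall>\<mu> :: (real^'p) measure.
       prob_space \<mu> \<and> sets \<mu> = sets borel \<and> integrable \<mu> (\<lambda>v. (norm v)^2) \<longrightarrow>
       (\<forall>t. frob_norm (second_moment (\<mu> \<Otimes>\<^sub>M (index_seq_measure :: (nat \<Rightarrow> 'n) measure))
                 (\<lambda>(\<delta>0, i). lin_sgd g \<eta> i \<delta>0 t))
            \<le> frob_norm (second_moment \<mu> (\<lambda>v. v))))"

end

theory Submission
  imports Defs
begin

text \<open>Start linearized SGD from \<open>\<delta>\<^sub>0\<close> uniform on the standard basis
  \<open>e\<^sub>1, \<dots>, e\<^sub>p\<close>, so that \<open>E[\<delta>\<^sub>0 \<delta>\<^sub>0\<^sup>T] = I/p\<close> has Frobenius norm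
  \<open>1/sqrt p\<close>. One step with index \<open>j\<close> maps \<open>e\<^sub>c\<close> to
  \<open>e\<^sub>c - \<eta> (g\<^sub>j)\<^sub>c g\<^sub>j\<close>, whose squared norms sum over \<open>c\<close> to
  \<open>p - 2\<eta>|g\<^sub>j|\<^sup>2 + \<eta>\<^sup>2|g\<^sub>j|\<^sup>4\<close>. Since \<open>tr S \<le> sqrt p |S|\<^sub>F\<close>,
  stability bounds the trace of \<open>E[\<delta>\<^sub>1 \<delta>\<^sub>1\<^sup>T]\<close> by 1, which says
  \<open>\<eta> \<Sum>|g\<^sub>j|\<^sup>4 \<le> 2 \<Sum>|g\<^sub>j|\<^sup>2\<close>. Cauchy-Schwarz,
  \<open>(\<Sum>|g\<^sub>j|\<^sup>2)\<^sup>2 \<le> n \<Sum>|g\<^sub>j|\<^sup>4\<close>, turns this into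
  \<open>tr G = (1/n) \<Sum>|g\<^sub>j|\<^sup>2 \<le> 2/\<eta>\<close>.\<close>

lemma power2_norm_vec_eq_sum: "(norm (v :: real^'p))\<^sup>2 = (\<Sum>a\<in>UNIV. (v $ a)\<^sup>2)"
  unfolding power2_norm_eq_inner inner_vec_def by (simp add: power2_eq_square)

lemma trace_le_sqrt_card_mult_frob_norm:
  fixes A :: "real^'p^'p"
  shows "trace A \<le> sqrt CARD('p) * frob_norm A"
proof -
  have "(trace A)\<^sup>2 \<le> (\<Sum>a\<in>UNIV. (A $ a $ a)\<^sup>2) * CARD('p)"
    unfolding trace_def by (rule sum_squared_le_sum_of_squares[of _ UNIV, simplified])
  also have "\<dots> \<le> (\<Sum>a\<in>UNIV. \<Sum>b\<in>UNIV. (A $ a $ b)\<^sup>2) * CARD('p)"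
    by (intro mult_right_mono sum_mono member_le_sum) auto
  finally have "trace A \<le> sqrt ((\<Sum>a\<in>UNIV. \<Sum>b\<in>UNIV. (A $ a $ b)\<^sup>2) * CARD('p))"
    by (rule real_le_rsqrt)
  then show ?thesis
    by (simp add: frob_norm_def real_sqrt_mult mult.commute)
qed

lemma frob_norm_scaleR_mat_1: "frob_norm (c *\<^sub>R mat 1 :: real^'p^'p) = \<bar>c\<bar> * sqrt CARD('p)"
proof -
  have "((c *\<^sub>R mat 1 :: real^'p^'p) $ a $ b)\<^sup>2 = (if a = b then c\<^sup>2 else 0)" for a b
    by (simp add: mat_def)
  then have "(\<Sum>a\<in>UNIV. \<Sum>b\<in>UNIV. ((c *\<^sub>R mat 1 :: real^'p^'p) $ a $ b)\<^sup>2) = c\<^sup>2 * CARD('p)"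
    by simp
  then show ?thesis
    by (simp add: frob_norm_def real_sqrt_mult)
qed

lemma power2_norm_axis_minus_scaleR:
  fixes u :: "real^'p"
  shows "(norm (axis c 1 - t *\<^sub>R u))\<^sup>2 = 1 - 2 * t * u $ c + t\<^sup>2 * (norm u)\<^sup>2"
  unfolding power2_norm_eq_inner
  by (simp add: inner_diff_left inner_diff_right inner_axis inner_axis' power2_eq_square
      algebra_simps)

lemma trace_empirical_fisher:
  fixes g :: "'n::finite \<Rightarrow> real^'p"
  shows "trace (empirical_fisher g) = (\<Sum>j\<in>UNIV. (norm (g j))\<^sup>2) / CARD('n)"
  unfolding trace_def empirical_fisher_def outer_def power2_norm_vec_eq_sum
  by (simp add: sum_component sum_divide_distrib power2_eq_square) (rule sum.swap)

lemma mean_le_of_sum_squares_le: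
  fixes s :: "'j \<Rightarrow> real"
  assumes "finite J" "J \<noteq> {}" "\<eta> > 0"
    and "\<eta> * (\<Sum>j\<in>J. (s j)\<^sup>2) \<le> 2 * (\<Sum>j\<in>J. s j)"
  shows "(\<Sum>j\<in>J. s j) / card J \<le> 2 / \<eta>"
proof (cases "(\<Sum>j\<in>J. s j) > 0")
  case True
  have "\<eta> * (\<Sum>j\<in>J. s j)\<^sup>2 \<le> \<eta> * ((\<Sum>j\<in>J. (s j)\<^sup>2) * card J)"
    using assms(3) by (simp add: sum_squared_le_sum_of_squares)
  also have "\<dots> \<le> 2 * (\<Sum>j\<in>J. s j) * card J"
    using assms(4) by (simp add: mult.assoc[symmetric] mult_right_mono)
  finally have "\<eta> * (\<Sum>j\<in>J. s j) \<le> 2 * card J"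
    using True by (simp add: power2_eq_square algebra_simps)
  moreover have "card J > 0"
    using assms by (simp add: card_gt_0_iff)
  ultimately show ?thesis
    using assms(3) by (simp add: field_simps)
next
  case False
  then have "(\<Sum>j\<in>J. s j) / card J \<le> 0"
    by (simp add: divide_nonpos_nonneg)
  also have "0 \<le> 2 / \<eta>"
    using assms(3) by simp
  finally show ?thesis .
qed

lemma prob_space_index_seq_measure:
  "prob_space (index_seq_measure :: (nat \<Rightarrow> 'n::finite) measure)"
  unfolding index_seq_measure_def
  by (intro prob_space_PiM measure_pmf.prob_space_axioms)

lemma integral_index_seq_measure_first:
  fixes F :: "'n::finite \<Rightarrow> real"
  shows "(\<integral>i. F (i 0) \<partial>(index_seq_measure :: (nat \<Rightarrow> 'n) measure)) = (\<Sum>j\<in>UNIV. F j) / CARD('n)"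
proof -
  let ?Q = "measure_pmf (pmf_of_set (UNIV :: 'n set))"
  have distr_first: "distr index_seq_measure ?Q (\<lambda>i. i 0) = ?Q"
    unfolding index_seq_measure_def
    by (rule distr_PiM_component) (auto intro: measure_pmf.prob_space_axioms)
  have "(\<lambda>i. i 0) \<in> measurable index_seq_measure ?Q"
    unfolding index_seq_measure_def by measurable
  then have "(\<integral>i. F (i 0) \<partial>index_seq_measure) = (\<integral>j. F j \<partial>?Q)"
    by (subst distr_first[symmetric], subst integral_distr) auto
  then show ?thesis
    by (simp add: integral_pmf_of_set)
qed

definition uniform_basis_distr :: "(real^'p::finite) measure" where
  "uniform_basis_distr = distr (measure_pmf (pmf_of_set UNIV)) borel (\<lambda>c. axis c 1)"

lemma sets_uniform_basis_distr [measurable_cong]: "sets uniform_basis_distr = sets borel"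
  by (simp add: uniform_basis_distr_def)

lemma prob_space_uniform_basis_distr: "prob_space uniform_basis_distr"
  unfolding uniform_basis_distr_def by (simp add: measure_pmf.prob_space_distr)

lemma integrable_uniform_basis_distr:
  fixes f :: "real^'p::finite \<Rightarrow> real"
  assumes "f \<in> borel_measurable borel"
  shows "integrable uniform_basis_distr f"
  unfolding uniform_basis_distr_def using assms
  by (simp add: integrable_distr_eq integrable_measure_pmf_finite)

lemma integral_uniform_basis_distr:
  fixes f :: "real^'p::finite \<Rightarrow> real"
  assumes "f \<in> borel_measurable borel"
  shows "(\<integral>v. f v \<partial>uniform_basis_distr) = (\<Sum>c\<in>UNIV. f (axis c 1)) / CARD('p)"
  unfolding uniform_basis_distr_def using assms
  by (simp add: integral_distr integral_pmf_of_set)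

lemma second_moment_uniform_basis_distr:
  "second_moment uniform_basis_distr (\<lambda>v. v) = (1 / CARD('p)) *\<^sub>R (mat 1 :: real^'p::finite^'p)"
proof -
  have "(\<Sum>c\<in>UNIV. axis c 1 $ a * axis c 1 $ b) = (if a = b then 1 else 0 :: real)" for a b :: 'p
    by (simp add: axis_def if_distrib[of "\<lambda>x. x * _"] cong: if_cong)
  then show ?thesis
    by (simp add: second_moment_def integral_uniform_basis_distr mat_def vec_eq_iff)
qed

lemma integral_uniform_basis_index_seq_first:
  fixes h :: "real^'p::finite \<Rightarrow> 'n::finite \<Rightarrow> real"
  assumes h: "\<And>j. (\<lambda>v. h v j) \<in> borel_measurable borel"
  shows "(\<integral>z. h (fst z) (snd z 0)
            \<partial>(uniform_basis_distr \<Otimes>\<^sub>M (index_seq_measure :: (nat \<Rightarrow> 'n) measure)))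
       = (\<Sum>c\<in>UNIV. \<Sum>j\<in>UNIV. h (axis c 1) j) / (CARD('p) * CARD('n))"
proof -
  let ?P = "measure_pmf (pmf_of_set (UNIV :: 'p set))"
  let ?N = "index_seq_measure :: (nat \<Rightarrow> 'n) measure"
  let ?F = "\<lambda>c j. h (axis c 1) j"
  interpret N: prob_space ?N
    by (rule prob_space_index_seq_measure)
  interpret PN: pair_prob_space ?P ?N
    by unfold_locales
  have product: "uniform_basis_distr \<Otimes>\<^sub>M ?N
      = distr (?P \<Otimes>\<^sub>M ?N) (borel \<Otimes>\<^sub>M ?N) (\<lambda>(c, i). (axis c 1, i))"
    using pair_measure_distr[of "\<lambda>c. axis c 1" ?P borel "\<lambda>i. i" ?N ?N] N.sigma_finite_measure_axioms
    by (simp add: uniform_basis_distr_def distr_id)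
  have "(\<lambda>z. h (fst z) (snd z 0)) \<in> borel_measurable (borel \<Otimes>\<^sub>M ?N)"
  proof (rule measurable_compose_countable'[where f = "\<lambda>j z. h (fst z) j" and I = UNIV])
    show "(\<lambda>z. h (fst z) j) \<in> borel_measurable (borel \<Otimes>\<^sub>M ?N)" for j
      using measurable_fst h by (rule measurable_compose)
    show "(\<lambda>z. snd z 0) \<in> measurable (borel \<Otimes>\<^sub>M ?N) (count_space UNIV)"
      unfolding index_seq_measure_def by measurable
  qed simp
  then have "(\<integral>z. h (fst z) (snd z 0) \<partial>(uniform_basis_distr \<Otimes>\<^sub>M ?N))
      = (\<integral>z. ?F (fst z) (snd z 0) \<partial>(?P \<Otimes>\<^sub>M ?N))"
    unfolding product by (subst integral_distr) (auto simp: case_prod_beta)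
  also have "\<dots> = (\<integral>c. (\<integral>i. ?F c (i 0) \<partial>?N) \<partial>?P)"
  proof -
    define B where "B = Max (range (\<lambda>(c, j). \<bar>?F c j\<bar>))"
    have bound: "\<bar>?F c j\<bar> \<le> B" for c j
      unfolding B_def by (intro Max_ge rev_image_eqI[of "(c, j)"]) simp_all
    have "(\<lambda>z. ?F (fst z) (snd z 0)) \<in> borel_measurable (?P \<Otimes>\<^sub>M ?N)"
      unfolding index_seq_measure_def by measurable
    then have "integrable (?P \<Otimes>\<^sub>M ?N) (\<lambda>z. ?F (fst z) (snd z 0))"
      by (intro PN.integrable_const_bound[where B = B] AE_I2) (simp_all add: bound)
    from PN.integral_fst'[OF this] show ?thesis
      by simp
  qed
  also have "\<dots> = (\<Sum>c\<in>UNIV. \<Sum>j\<in>UNIV. ?F c j) / (CARD('p) * CARD('n))"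
    by (simp add: integral_index_seq_measure_first integral_pmf_of_set sum_divide_distrib
        mult.commute)
  finally show ?thesis .
qed

lemma trace_second_moment_one_step:
  fixes g :: "'n::finite \<Rightarrow> real^'p::finite"
  shows "trace (second_moment (uniform_basis_distr \<Otimes>\<^sub>M (index_seq_measure :: (nat \<Rightarrow> 'n) measure))
                  (\<lambda>(\<delta>0, i). lin_sgd g \<eta> i \<delta>0 1))
       = (\<Sum>j\<in>UNIV. CARD('p) - 2 * \<eta> * (norm (g j))\<^sup>2 + \<eta>\<^sup>2 * (norm (g j))^4)
         / (CARD('p) * CARD('n))"
proof -
  define step where "step v j = v - (\<eta> * (g j \<bullet> v)) *\<^sub>R g j" for v j
  have step_measurable: "\<And>j. (\<lambda>v. (step v j $ a)\<^sup>2) \<in> borel_measurable borel" for a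
    unfolding step_def by (intro borel_measurable_continuous_onI continuous_intros)
  have "trace (second_moment (uniform_basis_distr \<Otimes>\<^sub>M (index_seq_measure :: (nat \<Rightarrow> 'n) measure))
                  (\<lambda>(\<delta>0, i). lin_sgd g \<eta> i \<delta>0 1))
      = (\<Sum>a\<in>UNIV. \<integral>z. (step (fst z) (snd z 0) $ a)\<^sup>2
            \<partial>(uniform_basis_distr \<Otimes>\<^sub>M (index_seq_measure :: (nat \<Rightarrow> 'n) measure)))"
    unfolding trace_def second_moment_def step_def by (simp add: power2_eq_square case_prod_beta)
  also have "\<dots> = (\<Sum>a\<in>UNIV. (\<Sum>c\<in>UNIV. \<Sum>j\<in>UNIV. (step (axis c 1) j $ a)\<^sup>2) / (CARD('p) * CARD('n)))"
    by (intro sum.cong refl integral_uniform_basis_index_seq_first step_measurable)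
  also have "\<dots> = (\<Sum>j\<in>UNIV. \<Sum>c\<in>UNIV. (norm (step (axis c 1) j))\<^sup>2) / (CARD('p) * CARD('n))"
    unfolding power2_norm_vec_eq_sum sum_divide_distrib[symmetric]
    by (rule arg_cong[where f = "\<lambda>x. x / _"], rule trans[OF sum.swap],
        rule trans[OF sum.cong[OF refl sum.swap]], rule sum.swap)
  also have "\<dots> = (\<Sum>j\<in>UNIV. \<Sum>c\<in>UNIV. 1 - 2 * \<eta> * (g j $ c)\<^sup>2 + \<eta>\<^sup>2 * (norm (g j))\<^sup>2 * (g j $ c)\<^sup>2)
      / (CARD('p) * CARD('n))"
    unfolding step_def
    by (simp add: power2_norm_axis_minus_scaleR inner_axis power_mult_distrib algebra_simps
        flip: power2_eq_square)
  also have "\<dots> = (\<Sum>j\<in>UNIV. CARD('p) - 2 * \<eta> * (norm (g j))\<^sup>2 + \<eta>\<^sup>2 * (norm (g j))^4)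
      / (CARD('p) * CARD('n))"
    by (simp add: sum.distrib sum_subtractf flip: sum_distrib_left power2_norm_vec_eq_sum)
      (simp add: sum_distrib_left power2_eq_square power4_eq_xxxx mult_ac)
  finally show ?thesis .
qed

lemma linearly_stable_imp_sum_norm_pow4_le:
  fixes g :: "'n::finite \<Rightarrow> real^'p::finite"
  assumes "\<eta> > 0" and "linearly_stable g \<eta>"
  shows "\<eta> * (\<Sum>j\<in>UNIV. (norm (g j))^4) \<le> 2 * (\<Sum>j\<in>UNIV. (norm (g j))\<^sup>2)"
proof -
  let ?S = "second_moment (uniform_basis_distr \<Otimes>\<^sub>M (index_seq_measure :: (nat \<Rightarrow> 'n) measure))
              (\<lambda>(\<delta>0, i). lin_sgd g \<eta> i \<delta>0 1)"
  have "integrable uniform_basis_distr (\<lambda>v::real^'p. (norm v)\<^sup>2)"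
    by (intro integrable_uniform_basis_distr borel_measurable_continuous_onI continuous_intros)
  then have "frob_norm ?S \<le> frob_norm (second_moment uniform_basis_distr (\<lambda>v::real^'p. v))"
    using prob_space_uniform_basis_distr sets_uniform_basis_distr
    by (intro assms(2)[unfolded linearly_stable_def, rule_format] conjI)
  also have "\<dots> = sqrt (real CARD('p)) / real CARD('p)"
    by (simp add: second_moment_uniform_basis_distr frob_norm_scaleR_mat_1)
  finally have frob: "frob_norm ?S \<le> sqrt (real CARD('p)) / real CARD('p)" .
  have "trace ?S \<le> sqrt CARD('p) * frob_norm ?S"
    by (rule trace_le_sqrt_card_mult_frob_norm)
  also have "\<dots> \<le> sqrt CARD('p) * (sqrt CARD('p) / CARD('p))"
    using frob by (intro mult_left_mono) simp_all
  also have "\<dots> = 1"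
    by simp
  finally have "(\<Sum>j\<in>UNIV. CARD('p) - 2 * \<eta> * (norm (g j))\<^sup>2 + \<eta>\<^sup>2 * (norm (g j))^4)
      \<le> real (CARD('p) * CARD('n))"
    unfolding trace_second_moment_one_step by (simp add: pos_divide_le_eq)
  then have "\<eta> * (\<eta> * (\<Sum>j\<in>UNIV. (norm (g j))^4)) \<le> \<eta> * (2 * (\<Sum>j\<in>UNIV. (norm (g j))\<^sup>2))"
    by (simp add: sum.distrib sum_subtractf sum_distrib_left power2_eq_square algebra_simps)
  then show ?thesis
    using assms(1) by simp
qed

theorem proposition3p2:
  fixes f :: "real^'d \<Rightarrow> real^'p \<Rightarrow> real"
    and x :: "'n::finite \<Rightarrow> real^'d"
    and y :: "'n \<Rightarrow> real"
    and \<theta>star :: "real^'p"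
    and g :: "'n \<Rightarrow> real^'p"
    and \<eta> :: real
  assumes interp: "\<And>i. f (x i) \<theta>star = y i"
    and grad: "\<And>i. (f (x i) has_derivative (\<lambda>h. g i \<bullet> h)) (at \<theta>star)"
    and eta_pos: "\<eta> > 0"
    and stable: "linearly_stable g \<eta>"
  shows "trace (empirical_fisher g) \<le> 2 / \<eta>"
proof -
  \<comment> \<open>\<open>interp\<close> and \<open>grad\<close> only identify \<open>g\<close> as the gradients at a zero-loss
    minimum; the bound uses nothing about \<open>g\<close> beyond stability.\<close>
  have "\<eta> * (\<Sum>j\<in>UNIV. ((norm (g j))\<^sup>2)\<^sup>2) \<le> 2 * (\<Sum>j\<in>UNIV. (norm (g j))\<^sup>2)"
    using linearly_stable_imp_sum_norm_pow4_le[OF eta_pos stable] by simp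
  then show ?thesis
    unfolding trace_empirical_fisher using eta_pos by (simp add: mean_le_of_sum_squares_le)
qed

end
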